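(* Let $n\ge 3$, let $d_1,\dots,d_{n-1}>0$, and let $k_1,\dots,k_{n-1}$ be real gains with $k_1+1>k_2$, $k_i>k_{i+1}$ for $i=2,\ldots,n-2$, and $k_{n-1}>0$. Define $f:\mathbb{R}^{n-1}\to\mathbb{R}^{n-1}$, writing $s_i(z)=\mathrm{sgn}(z_i)\,\mathrm{sgn}(|z_i|-d_i)$, by $$f_1(z)=-(k_1+1)s_1(z)+k_2 s_2(z),$$ $$f_i(z)=s_{i-1}(z)-(k_i+1)s_i(z)+k_{i+1}s_{i+1}(z),\quad i=2,\ldots,n-2,$$ $$f_{n-1}(z)=s_{n-2}(z)-(k_{n-1}+1)s_{n-1}(z).$$ Then the set of equilibria $\{z\in\mathbb{R}^{n-1}:\mathbf{0}\in\mathcal{K}(f(z))\}$ equals $$\mathcal{E}=\Big\{z\in\mathbb{R}^{n-1}:\sum_{i=1}^{n-1}|z_i|\,\big||z_i|-d_i\big|=0\Big\}.$$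
   Context: The sign function is $\mathrm{sgn}(z)=+1$ if $z\ge 0$ and $\mathrm{sgn}(z)=-1$ if $z<0$. For a (possibly discontinuous) vector field $f$, the Krasowskii regularization is $\mathcal{K}(f(z))=\bigcap_{\delta>0}\overline{\mathrm{co}}\,(f(B(z,\delta)))$, where $\overline{\mathrm{co}}$ denotes the closed convex hull and $B(z,\delta)$ the open ball of radius $\delta$ centered at $z$. (The vector field $f$ arises as the dynamics of relative positions $z_i=x_i-x_{i+1}$ of $n$ agents on a line.) *)

theory Defs
  imports "HOL-Analysis.Analysis"
begin

definition sgnp :: "real \<Rightarrow> real" where
  "sgnp x = (if x \<ge> 0 then 1 else -1)"

definition krasowskii ::
  "('a::real_normed_vector \<Rightarrow> 'b::real_normed_vector) \<Rightarrow> 'a \<Rightarrow> 'b set" where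
  "krasowskii F z = (\<Inter>\<delta>\<in>{0<..}. closure (convex hull (F ` ball z \<delta>)))"

text \<open>Coordinates z_1,...,z_(n-1) indexed by naturals 1..n-1.
  s_i(z) = sgn(z_i) sgn(|z_i| - d_i).\<close>
definition s_fun :: "(nat \<Rightarrow> real) \<Rightarrow> (nat \<Rightarrow> real) \<Rightarrow> nat \<Rightarrow> real" where
  "s_fun d x i = sgnp (x i) * sgnp (\<bar>x i\<bar> - d i)"

definition f_comp ::
  "nat \<Rightarrow> (nat \<Rightarrow> real) \<Rightarrow> (nat \<Rightarrow> real) \<Rightarrow> (nat \<Rightarrow> real) \<Rightarrow> nat \<Rightarrow> real" where
  "f_comp n k d x i =
     (if i = 1 then - (k 1 + 1) * s_fun d x 1 + k 2 * s_fun d x 2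
      else if i = n - 1 then s_fun d x (n - 2) - (k (n - 1) + 1) * s_fun d x (n - 1)
      else s_fun d x (i - 1) - (k i + 1) * s_fun d x i + k (i + 1) * s_fun d x (i + 1))"

text \<open>R^(n-1) is modelled as real^'m with CARD('m) = n-1, together with a
  bijection idx from the index type onto {1..n-1} fixing the order of the
  coordinates. coords turns a vector into its coordinate sequence z_1..z_(n-1).\<close>
definition coords :: "('m::finite \<Rightarrow> nat) \<Rightarrow> real^'m \<Rightarrow> nat \<Rightarrow> real" where
  "coords idx z i = z $ inv_into UNIV idx i"

definition field_f ::
  "('m::finite \<Rightarrow> nat) \<Rightarrow> nat \<Rightarrow> (nat \<Rightarrow> real) \<Rightarrow> (nat \<Rightarrow> real) \<Rightarrow> real^'m \<Rightarrow> real^'m" where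
  "field_f idx n k d z = (\<chi> j. f_comp n k d (coords idx z) (idx j))"

end

theory Submission
  imports Defs
begin

text \<open>Away from the switching set E the sign vector s(z) is locally constant, and f = L s for
  the linear tridiagonal map L; the gain conditions make L diagonally dominant, hence
  invertible, so one coordinate of L^-1 f is a nonzero constant near z and 0 is not in the
  Krasowskii hull. On E every coordinate sits at a switching point of its sign, so
  z + \<epsilon>(1,\<dots>,1) and z - \<epsilon>(1,\<dots>,1) have opposite sign vectors, and 0 is the midpoint of
  two values of f arbitrarily close to z.\<close>

lemma krasowskii_subset_closed_convex:
  assumes "\<delta> > 0" "F ` ball z \<delta> \<subseteq> C" "closed C" "convex C"
  shows "krasowskii F z \<subseteq> C"
proof -
  have "krasowskii F z \<subseteq> closure (convex hull (F ` ball z \<delta>))"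
    unfolding krasowskii_def using assms(1) by auto
  also have "\<dots> \<subseteq> C"
    using assms(2-4) by (intro closure_minimal hull_minimal)
  finally show ?thesis .
qed

lemma zero_in_krasowskii_if_antipodal:
  assumes "\<And>\<delta>. \<delta> > 0 \<Longrightarrow> \<exists>u\<in>ball z \<delta>. \<exists>v\<in>ball z \<delta>. F u = - F v"
  shows "0 \<in> krasowskii F z"
  unfolding krasowskii_def
proof (intro INT_I)
  fix \<delta> :: real assume "\<delta> \<in> {0<..}"
  then obtain u v where uv: "u \<in> ball z \<delta>" "v \<in> ball z \<delta>" "F u = - F v"
    using assms by force
  have "0 = (1/2) *\<^sub>R F u + (1/2) *\<^sub>R F v"
    using uv(3) by (simp add: algebra_simps)
  also have "\<dots> \<in> convex hull (F ` ball z \<delta>)"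
    using uv by (intro convexD convex_convex_hull hull_inc imageI) auto
  finally show "0 \<in> closure (convex hull (F ` ball z \<delta>))"
    using closure_subset by blast
qed

lemma sgnp_prod_locally_const:
  assumes "\<bar>y - x\<bar> < \<bar>x\<bar>" "\<bar>y - x\<bar> < \<bar>\<bar>x\<bar> - e\<bar>"
  shows "sgnp y * sgnp (\<bar>y\<bar> - e) = sgnp x * sgnp (\<bar>x\<bar> - e)"
proof -
  have "sgnp y = sgnp x" using assms(1) unfolding sgnp_def by (auto split: if_splits abs_split)
  moreover have "sgnp (\<bar>y\<bar> - e) = sgnp (\<bar>x\<bar> - e)"
    using abs_triangle_ineq3[of y x] assms(2) unfolding sgnp_def by (auto split: if_splits abs_split)
  ultimately show ?thesis by simp
qed

lemma sgnp_prod_antisym_at_switch: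
  assumes "x = 0 \<or> \<bar>x\<bar> = e" "0 < \<epsilon>" "\<epsilon> < e"
  shows "sgnp (x + \<epsilon>) * sgnp (\<bar>x + \<epsilon>\<bar> - e) = - (sgnp (x - \<epsilon>) * sgnp (\<bar>x - \<epsilon>\<bar> - e))"
  using assms unfolding sgnp_def by (auto split: if_splits abs_split)

definition tridiag :: "nat \<Rightarrow> (nat \<Rightarrow> real) \<Rightarrow> (nat \<Rightarrow> real) \<Rightarrow> nat \<Rightarrow> real" where
  "tridiag n k \<sigma> i =
     (if i = 1 then - (k 1 + 1) * \<sigma> 1 + k 2 * \<sigma> 2
      else if i = n - 1 then \<sigma> (n - 2) - (k (n - 1) + 1) * \<sigma> (n - 1)
      else \<sigma> (i - 1) - (k i + 1) * \<sigma> i + k (i + 1) * \<sigma> (i + 1))"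

lemma f_comp_eq_tridiag: "f_comp n k d x i = tridiag n k (s_fun d x) i"
  unfolding f_comp_def tridiag_def by simp

lemma tridiag_cong:
  assumes "n \<ge> 3" "i \<in> {1..n-1}" "\<forall>j\<in>{1..n-1}. \<sigma> j = \<tau> j"
  shows "tridiag n k \<sigma> i = tridiag n k \<tau> i"
proof -
  have "\<And>j. 1 \<le> j \<Longrightarrow> j \<le> n - 1 \<Longrightarrow> \<sigma> j = \<tau> j" using assms(3) by auto
  then show ?thesis using assms(1,2) unfolding tridiag_def by auto
qed

lemma gains_pos:
  fixes k :: "nat \<Rightarrow> real"
  assumes "\<forall>i\<in>{2..n-2}. k i > k (i + 1)" "k (n - 1) > 0" "2 \<le> j" "j \<le> n - 1"
  shows "k j > 0"
  using assms(4,3)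
proof (induction j rule: inc_induct)
  case base
  show ?case using assms(2) .
next
  case (step m)
  then have "k m > k (m + 1)" using assms(1) by auto
  with step show ?case by simp
qed

text \<open>Diagonal dominance: the diagonal coefficient k_i + 1 exceeds the sum of the
  off-diagonal ones, so at an index where \<bar>\<sigma>\<bar> is maximal the equation L \<sigma> = 0 forces \<sigma> = 0.\<close>
lemma tridiag_eq_0_at_max_imp_eq_0:
  fixes k :: "nat \<Rightarrow> real"
  assumes n3: "n \<ge> 3" and k1: "k 1 + 1 > k 2" and kd: "\<forall>i\<in>{2..n-2}. k i > k (i + 1)"
    and kn: "k (n - 1) > 0" and L0: "tridiag n k \<sigma> i0 = 0"
    and i0: "i0 \<in> {1..n-1}" and max: "\<And>i. i \<in> {1..n-1} \<Longrightarrow> \<bar>\<sigma> i\<bar> \<le> \<bar>\<sigma> i0\<bar>"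
  shows "\<sigma> i0 = 0"
proof -
  have kp: "\<And>j. 2 \<le> j \<Longrightarrow> j \<le> n - 1 \<Longrightarrow> k j > 0" using gains_pos[OF kd kn] by blast
  define M where "M = \<bar>\<sigma> i0\<bar>"
  have le: "\<And>i. i \<in> {1..n-1} \<Longrightarrow> \<bar>\<sigma> i\<bar> \<le> M" using max by (simp add: M_def)
  have M0: "M \<ge> 0" by (simp add: M_def)
  have "M \<le> 0"
  proof (cases "i0 = 1")
    case True
    have e: "(k 1 + 1) * \<sigma> 1 = k 2 * \<sigma> 2"
      using L0 True by (simp add: tridiag_def algebra_simps)
    have k2: "k 2 > 0" using kp n3 by auto
    have "(k 1 + 1) * M = \<bar>(k 1 + 1) * \<sigma> 1\<bar>" using True k1 k2 by (simp add: M_def abs_mult)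
    also have "\<dots> = k 2 * \<bar>\<sigma> 2\<bar>" using e k2 by (simp add: abs_mult)
    also have "\<dots> \<le> k 2 * M" using le[of 2] n3 k2 by (intro mult_left_mono) auto
    finally have "(k 1 + 1 - k 2) * M \<le> 0" by (simp add: algebra_simps)
    then show ?thesis using k1 M0 by (simp add: mult_le_0_iff)
  next
    case not1: False
    show ?thesis
    proof (cases "i0 = n - 1")
      case True
      have e: "(k (n-1) + 1) * \<sigma> (n-1) = \<sigma> (n-2)"
        using L0 True n3 unfolding tridiag_def by (simp add: algebra_simps split: if_splits)
      have "(k (n-1) + 1) * M = \<bar>(k (n-1) + 1) * \<sigma> (n-1)\<bar>" using True kn by (simp add: M_def abs_mult)
      also have "\<dots> = \<bar>\<sigma> (n-2)\<bar>" using e by simp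
      also have "\<dots> \<le> M" using le[of "n-2"] n3 by (simp; linarith)
      finally have "k (n-1) * M \<le> 0" by (simp add: algebra_simps)
      then show ?thesis using kn M0 by (simp add: mult_le_0_iff)
    next
      case False
      have ir: "2 \<le> i0" "i0 \<le> n - 2" using i0 not1 False by auto
      have e: "(k i0 + 1) * \<sigma> i0 = \<sigma> (i0 - 1) + k (i0+1) * \<sigma> (i0+1)"
        using L0 not1 False by (simp add: tridiag_def algebra_simps)
      have nbrs: "i0 - 1 \<in> {1..n-1}" "i0 + 1 \<in> {1..n-1}" using ir by auto
      have kk: "k (i0+1) > 0" using kp ir by auto
      have ki: "k i0 > k (i0+1)" using kd ir by auto
      have "(k i0 + 1) * M = \<bar>(k i0 + 1) * \<sigma> i0\<bar>" using ki kk by (simp add: M_def abs_mult)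
      also have "\<dots> \<le> \<bar>\<sigma> (i0 - 1)\<bar> + k (i0+1) * \<bar>\<sigma> (i0+1)\<bar>" using e kk
        by (metis abs_mult abs_of_pos abs_triangle_ineq)
      also have "\<dots> \<le> M + k (i0+1) * M"
        using le[OF nbrs(1)] le[OF nbrs(2)] kk by (intro add_mono mult_left_mono) auto
      finally have "(k i0 - k (i0+1)) * M \<le> 0" by (simp add: algebra_simps)
      then show ?thesis using ki M0 by (simp add: mult_le_0_iff)
    qed
  qed
  then show ?thesis by (simp add: M_def)
qed

lemma tridiag_eq_0_imp_eq_0:
  fixes k :: "nat \<Rightarrow> real"
  assumes n3: "n \<ge> 3" and gains: "k 1 + 1 > k 2" "\<forall>i\<in>{2..n-2}. k i > k (i + 1)" "k (n - 1) > 0"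
    and L: "\<forall>i\<in>{1..n-1}. tridiag n k \<sigma> i = 0" and j: "j \<in> {1..n-1}"
  shows "\<sigma> j = 0"
proof -
  let ?A = "(\<lambda>i. \<bar>\<sigma> i\<bar>) ` {1..n-1}"
  have fin: "finite ?A" "?A \<noteq> {}" using n3 by auto
  obtain i0 where i0: "i0 \<in> {1..n-1}" "\<bar>\<sigma> i0\<bar> = Max ?A" using Max_in[OF fin] by auto
  have max: "\<bar>\<sigma> i\<bar> \<le> \<bar>\<sigma> i0\<bar>" if "i \<in> {1..n-1}" for i
    using Max_ge[OF fin(1)] that i0(2) by simp
  have "tridiag n k \<sigma> i0 = 0" using L i0(1) by blast
  then have "\<sigma> i0 = 0" by (rule tridiag_eq_0_at_max_imp_eq_0[of n k \<sigma> i0, OF n3 gains _ i0(1) max])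
  then show ?thesis using max[OF j] by simp
qed

definition tridiag_vec :: "('m::finite \<Rightarrow> nat) \<Rightarrow> nat \<Rightarrow> (nat \<Rightarrow> real) \<Rightarrow> real^'m \<Rightarrow> real^'m" where
  "tridiag_vec idx n k w = (\<chi> j. tridiag n k (coords idx w) (idx j))"

definition sign_vec :: "('m::finite \<Rightarrow> nat) \<Rightarrow> (nat \<Rightarrow> real) \<Rightarrow> real^'m \<Rightarrow> real^'m" where
  "sign_vec idx d z = (\<chi> j. s_fun d (coords idx z) (idx j))"

lemma coords_vec_lambda:
  assumes "bij_betw idx UNIV {1..n-1}" "i \<in> {1..n-1}"
  shows "coords idx (\<chi> j. h (idx j)) i = h i"
  using assms by (simp add: coords_def bij_betw_inv_into_right)

lemma coords_idx:
  assumes "inj idx"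
  shows "coords idx w (idx j) = w $ j"
  using assms by (simp add: coords_def)

lemma field_f_eq_tridiag_vec:
  assumes "n \<ge> 3" "bij_betw idx UNIV {1..n-1}"
  shows "field_f idx n k d z = tridiag_vec idx n k (sign_vec idx d z)"
proof -
  have "f_comp n k d (coords idx z) (idx j) = tridiag n k (coords idx (sign_vec idx d z)) (idx j)"
    for j
  proof -
    have ij: "idx j \<in> {1..n-1}" using assms(2) bij_betwE by blast
    have "\<forall>i\<in>{1..n-1}. s_fun d (coords idx z) i = coords idx (sign_vec idx d z) i"
      by (simp add: sign_vec_def coords_vec_lambda[OF assms(2)])
    then show ?thesis unfolding f_comp_eq_tridiag by (rule tridiag_cong[OF assms(1) ij])
  qed
  then show ?thesis by (simp add: field_f_def tridiag_vec_def vec_eq_iff)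
qed

lemma linear_tridiag_vec: "linear (tridiag_vec idx n k)"
  by (rule linearI) (auto simp: tridiag_vec_def vec_eq_iff tridiag_def coords_def algebra_simps)

lemma inj_tridiag_vec:
  fixes k :: "nat \<Rightarrow> real" and idx :: "'m::finite \<Rightarrow> nat"
  assumes "n \<ge> 3" "bij_betw idx UNIV {1..n-1}"
    and "k 1 + 1 > k 2" "\<forall>i\<in>{2..n-2}. k i > k (i + 1)" "k (n - 1) > 0"
  shows "inj (tridiag_vec idx n k)"
  unfolding linear_injective_0[OF linear_tridiag_vec]
proof (intro allI impI)
  fix w :: "real^'m" assume w: "tridiag_vec idx n k w = 0"
  have zero: "\<forall>i\<in>{1..n-1}. tridiag n k (coords idx w) i = 0"
  proof
    fix i assume "i \<in> {1..n-1}"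
    then have "i \<in> range idx" using assms(2) by (simp add: bij_betw_imp_surj_on)
    then obtain j where "i = idx j" by blast
    then show "tridiag n k (coords idx w) i = 0" using w by (simp add: tridiag_vec_def vec_eq_iff)
  qed
  have "w $ j = 0" for j
  proof -
    have "idx j \<in> {1..n-1}" using assms(2) bij_betwE by blast
    then have "coords idx w (idx j) = 0" by (rule tridiag_eq_0_imp_eq_0[OF assms(1,3-5) zero])
    then show ?thesis using assms(2) by (simp add: coords_idx bij_betw_imp_inj_on)
  qed
  then show "w = 0" by (simp add: vec_eq_iff)
qed

text \<open>With G a left inverse of L, the j-th coordinate of G f is the j-th sign, which is
  frozen at c \<noteq> 0 near z; so f maps a ball around z into a closed hyperplane avoiding 0.\<close>
lemma equilibrium_imp_switching:
  fixes k d :: "nat \<Rightarrow> real" and idx :: "'m::finite \<Rightarrow> nat"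
  assumes n3: "n \<ge> 3" and bij: "bij_betw idx UNIV {1..n-1}"
    and gains: "k 1 + 1 > k 2" "\<forall>i\<in>{2..n-2}. k i > k (i + 1)" "k (n - 1) > 0"
    and eq: "0 \<in> krasowskii (field_f idx n k d) z" and i: "i \<in> {1..n-1}"
  shows "coords idx z i = 0 \<or> \<bar>coords idx z i\<bar> = d i"
proof (rule ccontr)
  assume nz: "\<not> ?thesis"
  let ?x = "coords idx z i"
  define \<delta> where "\<delta> = min \<bar>?x\<bar> \<bar>\<bar>?x\<bar> - d i\<bar>"
  define c where "c = s_fun d (coords idx z) i"
  define j where "j = inv_into UNIV idx i"
  have idx_j: "idx j = i" using bij i by (simp add: j_def bij_betw_inv_into_right)
  obtain G where G: "linear G" "G \<circ> tridiag_vec idx n k = id"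
    using linear_injective_left_inverse[OF linear_tridiag_vec inj_tridiag_vec[OF n3 bij gains]]
    by blast
  define C where "C = G -` {w. w $ j = c}"
  have "field_f idx n k d ` ball z \<delta> \<subseteq> C"
  proof clarify
    fix v assume "v \<in> ball z \<delta>"
    then have "\<bar>v $ j - z $ j\<bar> < \<delta>"
      by (metis component_le_norm_cart dist_norm dist_commute mem_ball
          order_le_less_trans vector_minus_component)
    then have "s_fun d (coords idx v) i = c"
      using sgnp_prod_locally_const[of "v $ j" "z $ j" "d i"]
      by (simp add: c_def s_fun_def coords_def j_def[symmetric] \<delta>_def)
    moreover have "G (field_f idx n k d v) = sign_vec idx d v"
      using G(2) by (simp add: field_f_eq_tridiag_vec[OF n3 bij] pointfree_idE)
    ultimately show "field_f idx n k d v \<in> C"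
      by (simp add: C_def sign_vec_def idx_j)
  qed
  moreover have "closed C"
    unfolding C_def using G(1)
    by (intro continuous_closed_vimage closed_Collect_eq continuous_intros)
      (simp_all add: linear_continuous_at linear_conv_bounded_linear)
  moreover have "convex C"
    unfolding C_def using G(1)
    by (intro convex_linear_vimage) (auto simp: convex_def simp flip: distrib_right)
  moreover have "\<delta> > 0" using nz by (auto simp: \<delta>_def)
  ultimately have "0 \<in> C" using eq krasowskii_subset_closed_convex by blast
  moreover have "c \<noteq> 0" by (simp add: c_def s_fun_def sgnp_def)
  ultimately show False using G(1) by (simp add: C_def linear_0)
qed

lemma switching_imp_equilibrium:
  fixes d :: "nat \<Rightarrow> real" and idx :: "'m::finite \<Rightarrow> nat"
  assumes n3: "n \<ge> 3" and bij: "bij_betw idx UNIV {1..n-1}" and d: "\<forall>i\<in>{1..n-1}. d i > 0"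
    and sw: "\<forall>i\<in>{1..n-1}. coords idx z i = 0 \<or> \<bar>coords idx z i\<bar> = d i"
  shows "0 \<in> krasowskii (field_f idx n k d) z"
proof (rule zero_in_krasowskii_if_antipodal)
  fix \<delta> :: real assume "\<delta> > 0"
  define dm where "dm = Min (d ` {1..n-1})"
  have dm0: "dm > 0" unfolding dm_def using d n3 by (subst Min_gr_iff) auto
  define \<epsilon> where "\<epsilon> = min (\<delta> / (2 * real CARD('m))) (dm / 2)"
  have \<epsilon>0: "\<epsilon> > 0" using \<open>\<delta> > 0\<close> dm0 by (simp add: \<epsilon>_def)
  have \<epsilon>d: "\<epsilon> < d i" if "i \<in> {1..n-1}" for i
  proof -
    have "dm \<le> d i" unfolding dm_def using that by simp
    then show ?thesis using dm0 by (simp add: \<epsilon>_def)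
  qed
  define u where "u = (\<chi> j::'m. \<epsilon>)"
  have "norm u \<le> (\<Sum>j\<in>UNIV. \<bar>u $ j\<bar>)" by (rule norm_le_l1_cart)
  also have "\<dots> = real CARD('m) * \<epsilon>" using \<epsilon>0 by (simp add: u_def)
  also have "\<dots> \<le> real CARD('m) * (\<delta> / (2 * real CARD('m)))"
    by (intro mult_left_mono) (auto simp: \<epsilon>_def)
  also have "\<dots> < \<delta>" using \<open>\<delta> > 0\<close> by simp
  finally have balls: "z + u \<in> ball z \<delta>" "z - u \<in> ball z \<delta>" by (auto simp: dist_norm)
  have "sign_vec idx d (z + u) $ j = - sign_vec idx d (z - u) $ j" for j
  proof -
    have inj: "inj idx" using bij by (rule bij_betw_imp_inj_on)
    have ij: "idx j \<in> {1..n-1}" using bij bij_betwE by blast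
    have "z $ j = 0 \<or> \<bar>z $ j\<bar> = d (idx j)" using bspec[OF sw ij] by (simp add: coords_idx[OF inj])
    then show ?thesis
      using sgnp_prod_antisym_at_switch[of "z $ j" "d (idx j)" \<epsilon>] \<epsilon>0 \<epsilon>d[OF ij]
      by (simp add: sign_vec_def s_fun_def coords_idx[OF inj] u_def)
  qed
  then have "sign_vec idx d (z + u) = - sign_vec idx d (z - u)" by (simp add: vec_eq_iff)
  then have "field_f idx n k d (z + u) = - field_f idx n k d (z - u)"
    by (simp add: field_f_eq_tridiag_vec[OF n3 bij] linear_neg[OF linear_tridiag_vec])
  with balls show "\<exists>u\<in>ball z \<delta>. \<exists>v\<in>ball z \<delta>. field_f idx n k d u = - field_f idx n k d v"
    by blast
qed

theorem proposition1:
  fixes idx :: "'m::finite \<Rightarrow> nat" and n :: nat and k d :: "nat \<Rightarrow> real"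
  assumes "n \<ge> 3"
    and "CARD('m) = n - 1"
    and "bij_betw idx UNIV {1..n-1}"
    and "\<forall>i\<in>{1..n-1}. d i > 0"
    and "k 1 + 1 > k 2"
    and "\<forall>i\<in>{2..n-2}. k i > k (i + 1)"
    and "k (n - 1) > 0"
  shows "{z :: real^'m. 0 \<in> krasowskii (field_f idx n k d) z}
       = {z :: real^'m. (\<Sum>i=1..n-1. \<bar>coords idx z i\<bar> * \<bar>\<bar>coords idx z i\<bar> - d i\<bar>) = 0}"
proof -
  have "(\<Sum>i=1..n-1. \<bar>coords idx z i\<bar> * \<bar>\<bar>coords idx z i\<bar> - d i\<bar>) = 0 \<longleftrightarrow>
        (\<forall>i\<in>{1..n-1}. coords idx z i = 0 \<or> \<bar>coords idx z i\<bar> = d i)" for z :: "real^'m"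
    by (subst sum_nonneg_eq_0_iff) auto
  then show ?thesis
    using equilibrium_imp_switching[OF assms(1,3,5-7)]
      switching_imp_equilibrium[OF assms(1,3,4)] by blast
qed

end
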